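(* Let $\{c_n\}_{n\ge1}$ be a real sequence, $\{d_{n+1}\}_{n\ge1}$ a positive chain sequence, and let $P_0(x)=1$, $P_1(x)=x-c_1$, $P_{n+1}(x)=(x-c_{n+1})P_n(x)-d_{n+1}(x^2+1)P_{n-1}(x)$ for $n\ge1$. Let $n\ge2$. If \[ c_1>\sqrt{d_2},\quad c_j>\sqrt{d_j}+\sqrt{d_{j+1}}\ (j=2,\dots,n-1),\quad c_n>\sqrt{d_n}, \] then all zeros of $P_n$ are positive. If \[ c_1<-\sqrt{d_2},\quad c_j<-\sqrt{d_j}-\sqrt{d_{j+1}}\ (j=2,\dots,n-1),\quad c_n<-\sqrt{d_n}, \] then all zeros of $P_n$ are negative.
   Context: A sequence $\{d_{n+1}\}_{n\ge1}$ is a positive chain sequence if there is a sequence $\{g_{n+1}\}_{n\ge0}$ with $0\le g_1<1$, $0<g_n<1$ for $n\ge2$, and $d_{n+1}=(1-g_n)g_{n+1}$ for $n\ge1$. *)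

theory Defs
  imports "HOL-Analysis.Analysis" "HOL-Computational_Algebra.Polynomial"
begin

text \<open>Positive chain sequence: d (n+1) for n \<ge> 1, with parameter sequence g indexed from 1
  (g 0 unused).\<close>
definition positive_chain_seq :: "(nat \<Rightarrow> real) \<Rightarrow> bool" where
  "positive_chain_seq d \<longleftrightarrow> (\<exists>g :: nat \<Rightarrow> real.
      0 \<le> g 1 \<and> g 1 < 1 \<and> (\<forall>n\<ge>2. 0 < g n \<and> g n < 1) \<and>
      (\<forall>n\<ge>1. d (n + 1) = (1 - g n) * g (n + 1)))"

fun Pseq :: "(nat \<Rightarrow> real) \<Rightarrow> (nat \<Rightarrow> real) \<Rightarrow> nat \<Rightarrow> real poly" where
  "Pseq c d 0 = 1"
| "Pseq c d (Suc 0) = [:- c 1, 1:]"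
| "Pseq c d (Suc (Suc n)) =
     [:- c (n + 2), 1:] * Pseq c d (Suc n) - smult (d (n + 2)) [:1, 0, 1:] * Pseq c d n"

end

theory Submission
  imports Defs
begin

text \<open>
  Since P_n(c; x) = (-1)^n P_n(-c; -x), the second claim follows from the first, and
  for the first it suffices to show P_n(-y) \<noteq> 0 for y \<ge> 0. The numbers
  s_k = (-1)^k P_k(-y) obey s_(k+1) = (c_(k+1) + y) s_k - d_(k+1) (1 + y^2) s_(k-1).
  Writing d_(k+1) = (1 - g_k) g_(k+1), induction gives
  s_k > (sqrt d_(k+1) + (1 - g_k) y) s_(k-1) > 0: this bound yields
  d_(k+1) s_(k-1) \<le> sqrt d_(k+1) s_k and d_(k+1) y^2 s_(k-1) \<le> g_(k+1) y s_k, hence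
  s_(k+1) \<ge> (c_(k+1) - sqrt d_(k+1) + (1 - g_(k+1)) y) s_k, and the hypothesis on c_(k+1)
  propagates the bound. At k = n the hypothesis c_n > sqrt d_n gives s_n > 0.
\<close>

lemma Pseq_reflect:
  "poly (Pseq c d n) x = (-1) ^ n * poly (Pseq (\<lambda>k. - c k) d n) (- x)"
  by (induction c d n rule: Pseq.induct) (simp_all add: algebra_simps)

lemma positive_chain_seqE:
  assumes "positive_chain_seq d"
  obtains g where "\<And>k. k \<ge> 1 \<Longrightarrow> 0 \<le> g k \<and> g k < 1"
    and "\<And>k. k \<ge> 1 \<Longrightarrow> d (k + 1) = (1 - g k) * g (k + 1)"
proof -
  obtain g where g1: "0 \<le> g 1" "g 1 < 1" and g2: "\<forall>k\<ge>2. 0 < g k \<and> g k < 1"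
    and dg: "\<forall>k\<ge>1. d (k + 1) = (1 - g k) * g (k + 1)"
    using assms unfolding positive_chain_seq_def by blast
  have "0 \<le> g k \<and> g k < 1" if "k \<ge> 1" for k
    using g1 g2 that by (cases "k = 1") (auto simp: less_imp_le)
  with dg that show thesis by blast
qed

lemma chain_recurrence_step:
  fixes p q y t u \<delta> c :: real
  assumes "p > 0" "y \<ge> 0" "t \<ge> 0" "u \<ge> 0" "\<delta> = t * u"
    and q: "q - t * y * p > sqrt \<delta> * p"
  shows "(c + y) * q - \<delta> * (1 + y\<^sup>2) * p \<ge> (c - sqrt \<delta>) * q + (1 - u) * y * q"
proof -
  have "\<delta> \<ge> 0" "t * y * p \<ge> 0" "sqrt \<delta> * p \<ge> 0"
    using assms by simp_all
  with q have q_lower: "sqrt \<delta> * p < q" "t * y * p \<le> q" by linarith+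
  have "\<delta> * p = sqrt \<delta> * (sqrt \<delta> * p)"
    using \<open>\<delta> \<ge> 0\<close> by (simp add: mult.assoc[symmetric])
  also have "\<dots> \<le> sqrt \<delta> * q"
    using q_lower(1) \<open>\<delta> \<ge> 0\<close> by (intro mult_left_mono) auto
  finally have constant_part: "\<delta> * p \<le> sqrt \<delta> * q" .
  have "\<delta> * y\<^sup>2 * p = (u * y) * (t * y * p)"
    using assms by (simp add: power2_eq_square algebra_simps)
  also have "\<dots> \<le> (u * y) * q"
    using q_lower(2) assms by (intro mult_left_mono) auto
  finally have quadratic_part: "\<delta> * y\<^sup>2 * p \<le> u * y * q" .
  have "(c + y) * q - \<delta> * (1 + y\<^sup>2) * p = (c + y) * q - \<delta> * p - \<delta> * y\<^sup>2 * p"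
    by (simp add: algebra_simps)
  with constant_part quadratic_part show ?thesis
    by (simp add: algebra_simps)
qed

text \<open>The sequence s stands for s k = (-1)^k P_k(-y).\<close>

locale chain_recurrence =
  fixes s c d g :: "nat \<Rightarrow> real" and y :: real
  assumes g: "\<And>k. k \<ge> 1 \<Longrightarrow> 0 \<le> g k \<and> g k < 1"
    and dg: "\<And>k. k \<ge> 1 \<Longrightarrow> d (k + 1) = (1 - g k) * g (k + 1)"
    and y: "y \<ge> 0"
    and s0: "s 0 = 1" and s1: "s 1 = c 1 + y"
    and rec: "\<And>k. s (k + 2) = (c (k + 2) + y) * s (k + 1) - d (k + 2) * (1 + y\<^sup>2) * s k"
begin

lemma d_nonneg:
  assumes "k \<ge> 2"
  shows "d k \<ge> 0"
proof -
  have "k - 1 \<ge> 1" "k \<ge> 1"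
    using assms by simp_all
  then show ?thesis
    using dg[of "k - 1"] g[of "k - 1"] g[of k] by simp
qed

lemma invariant:
  assumes c1: "c 1 > sqrt (d 2)"
    and cj: "\<forall>j\<in>{2..m}. c j > sqrt (d j) + sqrt (d (j + 1))"
    and "k < m"
  shows "s k > 0 \<and> s (k + 1) > 0 \<and>
    s (k + 1) - (1 - g (k + 1)) * y * s k > sqrt (d (k + 2)) * s k"
  using \<open>k < m\<close>
proof (induction k)
  case 0
  have "s 1 - (1 - g 1) * y = c 1 + g 1 * y"
    using s1 by (simp add: algebra_simps)
  moreover have "g 1 * y \<ge> 0" "sqrt (d 2) \<ge> 0"
    using g[of 1] y d_nonneg[of 2] by simp_all
  ultimately have "s 0 > 0 \<and> s 1 > 0 \<and> s 1 - (1 - g 1) * y * s 0 > sqrt (d 2) * s 0"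
    unfolding s0 using c1 y s1 by linarith
  then show ?case
    by (simp add: numeral_2_eq_2)
next
  case (Suc k)
  then have p: "s k > 0" and q: "s (k + 1) > 0"
    and gap: "s (k + 1) - (1 - g (k + 1)) * y * s k > sqrt (d (k + 2)) * s k"
    by simp_all
  have "s (k + 2) \<ge> (c (k + 2) - sqrt (d (k + 2))) * s (k + 1) + (1 - g (k + 2)) * y * s (k + 1)"
    unfolding rec
    using chain_recurrence_step[OF p y _ _ _ gap] g[of "k + 1"] g[of "k + 2"] dg[of "k + 1"]
    by simp
  moreover have "(c (k + 2) - sqrt (d (k + 2))) * s (k + 1) > sqrt (d (k + 3)) * s (k + 1)"
    using cj[rule_format, of "k + 2"] Suc.prems q
    by (intro mult_strict_right_mono) (auto simp: eval_nat_numeral)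
  ultimately have "s (k + 2) - (1 - g (k + 2)) * y * s (k + 1) > sqrt (d (k + 3)) * s (k + 1)"
    by linarith
  moreover have "(1 - g (k + 2)) * y * s (k + 1) \<ge> 0" "sqrt (d (k + 3)) * s (k + 1) \<ge> 0"
    using g[of "k + 2"] d_nonneg[of "k + 3"] y q by simp_all
  ultimately show ?case
    using q by (simp add: numeral_eq_Suc)
qed

lemma positive:
  assumes "n \<ge> 2"
    and c1: "c 1 > sqrt (d 2)"
    and cj: "\<forall>j\<in>{2..n-1}. c j > sqrt (d j) + sqrt (d (j + 1))"
    and cn: "c n > sqrt (d n)"
  shows "s n > 0"
proof -
  obtain k where n: "n = k + 2"
    using \<open>n \<ge> 2\<close> by (metis add.commute le_add_diff_inverse)
  have p: "s k > 0" and q: "s (k + 1) > 0"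
    and gap: "s (k + 1) - (1 - g (k + 1)) * y * s k > sqrt (d (k + 2)) * s k"
    using invariant[OF c1 cj, of k] n by simp_all
  have "s n \<ge> (c n - sqrt (d n)) * s (k + 1) + (1 - g n) * y * s (k + 1)"
    unfolding n rec
    using chain_recurrence_step[OF p y _ _ _ gap] g[of "k + 1"] g[of "k + 2"] dg[of "k + 1"]
    by simp
  moreover have "(c n - sqrt (d n)) * s (k + 1) > 0" "(1 - g n) * y * s (k + 1) \<ge> 0"
    using cn q y g[of n] n by simp_all
  ultimately show ?thesis
    by linarith
qed

end

lemma Pseq_roots_pos:
  assumes "positive_chain_seq d" "n \<ge> 2"
    and "c 1 > sqrt (d 2)"
    and "\<forall>j\<in>{2..n-1}. c j > sqrt (d j) + sqrt (d (j + 1))"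
    and "c n > sqrt (d n)"
    and "poly (Pseq c d n) x = 0"
  shows "x > 0"
proof (rule ccontr)
  assume "\<not> x > 0"
  obtain g where "\<And>k. k \<ge> 1 \<Longrightarrow> 0 \<le> g k \<and> g k < 1"
    and "\<And>k. k \<ge> 1 \<Longrightarrow> d (k + 1) = (1 - g k) * g (k + 1)"
    using positive_chain_seqE[OF assms(1)] by blast
  then interpret chain_recurrence "\<lambda>k. (-1) ^ k * poly (Pseq c d k) x" c d g "- x"
    using \<open>\<not> x > 0\<close> by unfold_locales (simp_all add: power2_eq_square algebra_simps)
  have "(-1) ^ n * poly (Pseq c d n) x > 0"
    using positive assms(2-5) by blast
  with assms(6) show False
    by simp
qed

lemma Pseq_roots_neg:
  assumes "positive_chain_seq d" "n \<ge> 2"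
    and "c 1 < - sqrt (d 2)"
    and "\<forall>j\<in>{2..n-1}. c j < - sqrt (d j) - sqrt (d (j + 1))"
    and "c n < - sqrt (d n)"
    and "poly (Pseq c d n) x = 0"
  shows "x < 0"
proof -
  have "poly (Pseq (\<lambda>k. - c k) d n) (- x) = 0"
    using assms(6) Pseq_reflect[of c d n x] by simp
  then have "- x > 0"
    using Pseq_roots_pos[of d n "\<lambda>k. - c k"] assms(1-5) by fastforce
  then show ?thesis
    by simp
qed

theorem theorem2p3:
  fixes c d :: "nat \<Rightarrow> real" and n :: nat
  assumes chain: "positive_chain_seq d"
    and n2: "n \<ge> 2"
  shows "((c 1 > sqrt (d 2) \<and> (\<forall>j\<in>{2..n-1}. c j > sqrt (d j) + sqrt (d (j + 1)))
            \<and> c n > sqrt (d n))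
           \<longrightarrow> (\<forall>x::real. poly (Pseq c d n) x = 0 \<longrightarrow> x > 0)) \<and>
         ((c 1 < - sqrt (d 2) \<and> (\<forall>j\<in>{2..n-1}. c j < - sqrt (d j) - sqrt (d (j + 1)))
            \<and> c n < - sqrt (d n))
           \<longrightarrow> (\<forall>x::real. poly (Pseq c d n) x = 0 \<longrightarrow> x < 0))"
  using Pseq_roots_pos[OF chain n2] Pseq_roots_neg[OF chain n2] by blast

end
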